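(* Let $\mathcal{H}=\mathcal{H}_{\mathcal{Y}}\times\mathcal{H}_{n+1}$ be closed under scaling, let $c\in(0,1)$, let $\ell$ be a loss on $\mathcal{H}_{\mathcal{Y}}\times\mathcal{X}\times\mathcal{Y}$, and let $\Phi\colon\mathbb{R}\to\mathbb{R}$ be a decreasing function with $\lim_{t\to+\infty}\Phi(t)=0$ and $\Phi(t)\ge\mathbb{1}_{t\le0}$ for all $t\in\mathbb{R}$. Let $\mathcal{D}$ be a distribution over $\mathcal{X}\times\mathcal{Y}$, and assume $\hat h=(\hat h_{\mathcal{Y}},\hat h_{n+1})\in\mathcal{H}$ satisfies $\mathcal{E}_{\ell}(\hat h_{\mathcal{Y}})=\inf_{h_{\mathcal{Y}}\in\mathcal{H}_{\mathcal{Y}}}\mathcal{E}_{\ell}(h_{\mathcal{Y}})$ and $\mathcal{E}_{\ell_{\hat h_{\mathcal{Y}}}}(\hat h_{n+1})=\inf_{h=(h_{\mathcal{Y}},h_{n+1})\in\mathcal{H}}\mathcal{E}_{\ell_{h_{\mathcal{Y}}}}(h_{n+1})$. If there exists $h^*=(h^*_{\mathcal{Y}},h^*_{n+1})\in\mathcal{H}$ with $\mathcal{E}_{\mathsf{L}_{\mathrm{abs}}}(h^* )=0$, then $\mathcal{E}_{\mathsf{L}_{\mathrm{abs}}}(\hat h)=0$.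
   Context: Let $\mathcal{X}$ be an input space and $\mathcal{Y}=\{1,\dots,n\}$, $n\ge2$. $\mathcal{H}_{\mathcal{Y}}$ is a set of functions $h_{\mathcal{Y}}\colon\mathcal{X}\times\mathcal{Y}\to\mathbb{R}$ and $\mathcal{H}_{n+1}$ a set of functions $h_{n+1}\colon\mathcal{X}\to\mathbb{R}$; a pair $h=(h_{\mathcal{Y}},h_{n+1})$ is identified with the function on $\mathcal{X}\times(\mathcal{Y}\cup\{n+1\})$ given by $h(x,y)=h_{\mathcal{Y}}(x,y)$ for $y\in\mathcal{Y}$ and $h(x,n+1)=h_{n+1}(x)$. $\mathcal{H}$ is closed under scaling if $\alpha h\in\mathcal{H}$ for all $h\in\mathcal{H}$ and $\alpha\in\mathbb{R}$. $\mathsf{h}_{\mathcal{Y}}(x)=\operatorname{argmax}_{y\in\mathcal{Y}}h_{\mathcal{Y}}(x,y)$ (ties broken by a fixed deterministic rule). The predicted label $\mathsf{h}(x)$ is $n+1$ if $h_{n+1}(x)\ge\max_{y\in\mathcal{Y}}h_{\mathcal{Y}}(x,y)$, and $\mathsf{h}_{\mathcal{Y}}(x)$ otherwise. The abstention loss with constant cost $c$ is $\mathsf{L}_{\mathrm{abs}}(h,x,y)=\mathbb{1}_{\mathsf{h}(x)\neq y}\mathbb{1}_{\mathsf{h}(x)\neq n+1}+c\,\mathbb{1}_{\mathsf{h}(x)=n+1}$. For fixed $h_{\mathcal{Y}}$, the second-stage surrogate is $\ell_{h_{\mathcal{Y}}}(h_{n+1},x,y)=\mathbb{1}_{\mathsf{h}_{\mathcal{Y}}(x)\neq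 y}\,\Phi\big(h_{n+1}(x)-\max_{y'\in\mathcal{Y}}h_{\mathcal{Y}}(x,y')\big)+c\,\Phi\big(\max_{y'\in\mathcal{Y}}h_{\mathcal{Y}}(x,y')-h_{n+1}(x)\big)$. For a loss $\mathsf{L}$, $\mathcal{E}_{\mathsf{L}}(g)=\mathbb{E}_{(x,y)\sim\mathcal{D}}[\mathsf{L}(g,x,y)]$. *)

theory Defs
  imports "HOL-Probability.Probability"
begin

text \<open>Labels are 1..n (type nat); label n+1 means abstention.
  Scores h_Y : 'x => nat => real (only values on {1..n} matter), h_{n+1} : 'x => real.\<close>

definition maxscore :: "nat \<Rightarrow> ('x \<Rightarrow> nat \<Rightarrow> real) \<Rightarrow> 'x \<Rightarrow> real" where
  "maxscore n hY x = Max ((\<lambda>y. hY x y) ` {1..n})"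

definition argmax_label :: "nat \<Rightarrow> ('x \<Rightarrow> nat \<Rightarrow> real) \<Rightarrow> 'x \<Rightarrow> nat" where
  "argmax_label n hY x = (LEAST y. y \<in> {1..n} \<and> hY x y = maxscore n hY x)"

definition pred_label :: "nat \<Rightarrow> ('x \<Rightarrow> nat \<Rightarrow> real) \<Rightarrow> ('x \<Rightarrow> real) \<Rightarrow> 'x \<Rightarrow> nat" where
  "pred_label n hY hn x = (if hn x \<ge> maxscore n hY x then n + 1 else argmax_label n hY x)"

definition abs_loss :: "nat \<Rightarrow> real \<Rightarrow> ('x \<Rightarrow> nat \<Rightarrow> real) \<Rightarrow> ('x \<Rightarrow> real) \<Rightarrow> 'x \<Rightarrow> nat \<Rightarrow> real" where
  "abs_loss n c hY hn x y =
     (if pred_label n hY hn x \<noteq> y \<and> pred_label n hY hn x \<noteq> n + 1 then 1 else 0)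
     + c * (if pred_label n hY hn x = n + 1 then 1 else 0)"

definition second_stage_loss ::
  "nat \<Rightarrow> real \<Rightarrow> (real \<Rightarrow> real) \<Rightarrow> ('x \<Rightarrow> nat \<Rightarrow> real) \<Rightarrow> ('x \<Rightarrow> real) \<Rightarrow> 'x \<Rightarrow> nat \<Rightarrow> real" where
  "second_stage_loss n c \<Phi> hY hn x y =
     (if argmax_label n hY x \<noteq> y then 1 else 0) * \<Phi> (hn x - maxscore n hY x)
     + c * \<Phi> (maxscore n hY x - hn x)"

definition expected_loss :: "('x \<times> nat) measure \<Rightarrow> ('x \<Rightarrow> nat \<Rightarrow> real) \<Rightarrow> ennreal" where
  "expected_loss D L = (\<integral>\<^sup>+ z. ennreal (L (fst z) (snd z)) \<partial>D)"

end

theory Submission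
  imports Defs
begin

text \<open>The abstention loss is dominated pointwise by the second-stage surrogate, so the risk of
  \<open>\<hat>h\<close> is at most the infimum of the surrogate risk, in particular at most the surrogate risk of
  every rescaling \<open>\<alpha> h\<^sup>*\<close>. Almost surely \<open>h\<^sup>*\<close> predicts the true label without abstaining,
  i.e. with a positive margin \<open>m(x) = max\<^sub>y h\<^sup>*(x,y) - h\<^sup>*(x,n+1)\<close>; there the surrogate loss of
  \<open>\<alpha> h\<^sup>*\<close> equals \<open>c \<Phi>(\<alpha> m(x))\<close>, which decreases to 0 as \<open>\<alpha> \<rightarrow> \<infinity>\<close>. Monotone convergence
  finishes the argument.\<close>

definition abstention_margin :: "nat \<Rightarrow> ('x \<Rightarrow> nat \<Rightarrow> real) \<Rightarrow> ('x \<Rightarrow> real) \<Rightarrow> 'x \<Rightarrow> real" where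
  "abstention_margin n hY hn x = maxscore n hY x - hn x"

lemma emeasure_zero_if_nn_integral_zero:
  assumes "integral\<^sup>N M A = 0" "0 < c" "S \<in> sets M" "\<And>z. z \<in> S \<Longrightarrow> c \<le> A z"
  shows "emeasure M S = 0"
proof -
  have "c * emeasure M S = (\<integral>\<^sup>+ z. c * indicator S z \<partial>M)"
    using assms(3) by (simp add: nn_integral_cmult_indicator)
  also have "\<dots> \<le> integral\<^sup>N M A"
    using assms(4) by (intro nn_integral_mono) (auto split: split_indicator)
  finally show ?thesis
    using assms(1,2) by (metis le_zero_eq mult_eq_0_iff not_less_iff_gr_or_eq)
qed

text \<open>Neither \<open>A\<close> nor \<open>F\<close> need be measurable: the bound is checked on simple functions below \<open>F\<close>.\<close>

lemma nn_integral_mono_off_superlevel_set: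
  fixes A F K :: "'a \<Rightarrow> ennreal"
  assumes A: "integral\<^sup>N M A = 0" and c: "0 < c" and K: "K \<in> borel_measurable M"
    and le: "\<And>z. z \<in> space M \<Longrightarrow> A z < c \<Longrightarrow> F z \<le> K z"
  shows "integral\<^sup>N M F \<le> integral\<^sup>N M K"
proof -
  have "integral\<^sup>S M g \<le> integral\<^sup>N M K" if g: "simple_function M g" "g \<le> F" for g
  proof -
    let ?S = "{z \<in> space M. K z < g z}"
    have S: "?S \<in> sets M"
      using borel_measurable_simple_function[OF g(1)] K by measurable
    have "c \<le> A z" if z: "z \<in> ?S" for z
    proof (rule ccontr)
      assume "\<not> c \<le> A z"
      then have "F z \<le> K z"
        using z le by (simp add: not_le)
      moreover have "K z < F z"
        using z g(2) by (auto simp: le_fun_def intro: order.strict_trans2)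
      ultimately show False
        by simp
    qed
    then have "emeasure M ?S = 0"
      by (rule emeasure_zero_if_nn_integral_zero[OF A c S])
    then have "AE z in M. g z \<le> K z"
      using S by (intro AE_I[of _ _ ?S]) auto
    then have "integral\<^sup>N M g \<le> integral\<^sup>N M K"
      by (rule nn_integral_mono_AE)
    then show ?thesis
      using nn_integral_eq_simple_integral[OF g(1)] by simp
  qed
  then show ?thesis
    by (subst nn_integral_def[of M F]) (auto intro!: SUP_least)
qed

lemma borel_measurable_antimono:
  fixes \<Phi> :: "real \<Rightarrow> real"
  assumes "antimono \<Phi>"
  shows "\<Phi> \<in> borel_measurable borel"
proof -
  have "mono (\<lambda>t. - \<Phi> t)"
    using assms by (auto simp: mono_def antimono_def)
  then have "(\<lambda>t. - \<Phi> t) \<in> borel_measurable borel"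
    by (rule borel_measurable_mono)
  then have "(\<lambda>t. - (- \<Phi> t)) \<in> borel_measurable borel"
    by measurable
  then show ?thesis
    by simp
qed

lemma INF_nn_integral_antimono_scaled_eq_0:
  fixes \<Phi> :: "real \<Rightarrow> real" and g :: "'a \<Rightarrow> real"
  assumes M: "finite_measure M" and g: "g \<in> borel_measurable M"
    and \<Phi>_antimono: "antimono \<Phi>" and \<Phi>_lim: "(\<Phi> \<longlongrightarrow> 0) at_top"
  shows "(INF i. \<integral>\<^sup>+ z. ennreal (if 0 < g z then \<Phi> (real (Suc i) * g z) else 0) \<partial>M) = 0"
proof -
  define K where "K i z = ennreal (if 0 < g z then \<Phi> (real (Suc i) * g z) else 0)" for i z
  have K_measurable: "K i \<in> borel_measurable M" for i
    unfolding K_def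
    using measurable_compose[OF _ borel_measurable_antimono[OF \<Phi>_antimono]] g by measurable
  have K_antimono: "K j z \<le> K i z" if "i \<le> j" for i j z
    using that \<Phi>_antimono
    by (auto simp: K_def antimono_def intro!: ennreal_leI mult_right_mono)
  have "K i z \<le> ennreal (\<Phi> 0)" for i z
    using \<Phi>_antimono by (auto simp: K_def antimono_def intro!: ennreal_leI)
  then have "integral\<^sup>N M (K i) \<le> ennreal (\<Phi> 0) * emeasure M (space M)" for i
    using nn_integral_mono[of M "K i" "\<lambda>_. ennreal (\<Phi> 0)"] by simp
  then have K_finite: "integral\<^sup>N M (K i) < \<infinity>" for i
    using finite_measure.emeasure_finite[OF M, of "space M"]
    by (metis ennreal_mult_less_top ennreal_less_top infinity_ennreal_def order_le_less_trans top.not_eq_extremum)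
  have K_tendsto: "(\<lambda>i. K i z) \<longlonglongrightarrow> 0" for z
  proof (cases "0 < g z")
    case True
    have "filterlim (\<lambda>i. real (Suc i) * g z) at_top sequentially"
      using filterlim_at_top_mult_tendsto_pos[OF tendsto_const True filterlim_real_sequentially]
      by (rule filterlim_sequentially_Suc[THEN iffD2])
    then have "(\<lambda>i. \<Phi> (real (Suc i) * g z)) \<longlonglongrightarrow> 0"
      using \<Phi>_lim by (rule filterlim_compose[rotated])
    then have "(\<lambda>i. ennreal (\<Phi> (real (Suc i) * g z))) \<longlonglongrightarrow> ennreal 0"
      by (rule tendsto_ennrealI)
    then show ?thesis
      using True by (simp add: K_def)
  qed (simp add: K_def)
  have "decseq K"
    using K_antimono by (intro antimonoI le_funI)
  then have "(INF i. integral\<^sup>N M (K i)) = (\<integral>\<^sup>+ z. (INF i. K i z) \<partial>M)"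
    by (rule nn_integral_monotone_convergence_INF_decseq[symmetric, OF _ K_measurable K_finite])
  also have "\<dots> = 0"
  proof -
    have "decseq (\<lambda>i. K i z)" for z
      using K_antimono by (intro antimonoI)
    then have "(INF i. K i z) = 0" for z
      using LIMSEQ_unique[OF LIMSEQ_INF K_tendsto] by blast
    then show ?thesis
      by simp
  qed
  finally show ?thesis
    unfolding K_def .
qed

lemma argmax_label_in:
  assumes "n \<ge> 1"
  shows "argmax_label n hY x \<in> {1..n}"
proof -
  have "maxscore n hY x \<in> (\<lambda>y. hY x y) ` {1..n}"
    unfolding maxscore_def using assms by (intro Max_in) auto
  then obtain y where "y \<in> {1..n}" "hY x y = maxscore n hY x"
    by auto
  then show ?thesis
    unfolding argmax_label_def by (metis (mono_tags, lifting) LeastI)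
qed

lemma maxscore_scale:
  assumes "n \<ge> 1" "0 < a"
  shows "maxscore n (\<lambda>x y. a * hY x y) x = a * maxscore n hY x"
proof -
  have "a * Max ((\<lambda>y. hY x y) ` {1..n}) = Max ((\<lambda>t. a * t) ` (\<lambda>y. hY x y) ` {1..n})"
    using assms by (intro mono_Max_commute) (auto simp: mono_def)
  then show ?thesis
    unfolding maxscore_def by (simp add: image_image)
qed

lemma argmax_label_scale:
  assumes "n \<ge> 1" "0 < a"
  shows "argmax_label n (\<lambda>x y. a * hY x y) x = argmax_label n hY x"
  unfolding argmax_label_def maxscore_scale[OF assms] using assms by simp

lemma abs_loss_le_second_stage_loss:
  assumes "n \<ge> 1" "0 \<le> c" and \<Phi>_ge: "\<And>t. \<Phi> t \<ge> (if t \<le> 0 then 1 else 0)"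
  shows "abs_loss n c hY hn x y \<le> second_stage_loss n c \<Phi> hY hn x y"
proof -
  have \<Phi>_nonneg: "0 \<le> \<Phi> t" for t
    using \<Phi>_ge[of t] by (auto split: if_splits)
  show ?thesis
  proof (cases "hn x \<ge> maxscore n hY x")
    case True
    then have "1 \<le> \<Phi> (maxscore n hY x - hn x)"
      using \<Phi>_ge[of "maxscore n hY x - hn x"] by simp
    then have "c \<le> c * \<Phi> (maxscore n hY x - hn x)"
      using assms(2) by (simp add: mult_le_cancel_left1)
    then show ?thesis
      using True \<Phi>_nonneg
      by (simp add: abs_loss_def second_stage_loss_def pred_label_def add_increasing)
  next
    case False
    then have "1 \<le> \<Phi> (hn x - maxscore n hY x)"
      using \<Phi>_ge[of "hn x - maxscore n hY x"] by simp
    moreover have "0 \<le> c * \<Phi> (maxscore n hY x - hn x)"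
      using assms(2) \<Phi>_nonneg by simp
    moreover have "argmax_label n hY x \<noteq> n + 1"
      using argmax_label_in[OF assms(1)] by (metis atLeastAtMost_iff not_add_less1 not_le less_add_one)
    ultimately show ?thesis
      using False by (simp add: abs_loss_def second_stage_loss_def pred_label_def add_increasing2)
  qed
qed

lemma abs_loss_less_cost_imp_correct:
  assumes "c \<le> 1" "abs_loss n c hY hn x y < c"
  shows "0 < abstention_margin n hY hn x" "argmax_label n hY x = y"
  using assms
  by (auto simp: abs_loss_def pred_label_def abstention_margin_def split: if_splits)

lemma second_stage_loss_scale_if_correct:
  assumes "n \<ge> 1" "0 < a" "argmax_label n hY x = y"
  shows "second_stage_loss n c \<Phi> (\<lambda>x y. a * hY x y) (\<lambda>x. a * hn x) x y
           = c * \<Phi> (a * abstention_margin n hY hn x)"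
  using assms
  by (simp add: second_stage_loss_def abstention_margin_def maxscore_scale argmax_label_scale
      right_diff_distrib)

lemma expected_second_stage_loss_scale_le:
  assumes n: "n \<ge> 1" and c: "0 < c" "c \<le> 1" and a: "0 < a"
    and zero_risk: "expected_loss D (abs_loss n c hY hn) = 0"
    and margin_measurable: "(\<lambda>z. abstention_margin n hY hn (fst z)) \<in> borel_measurable D"
    and \<Phi>_measurable: "\<Phi> \<in> borel_measurable borel"
  shows "expected_loss D (second_stage_loss n c \<Phi> (\<lambda>x y. a * hY x y) (\<lambda>x. a * hn x))
    \<le> (\<integral>\<^sup>+ z. ennreal (if 0 < abstention_margin n hY hn (fst z)
                    then c * \<Phi> (a * abstention_margin n hY hn (fst z)) else 0) \<partial>D)"
  unfolding expected_loss_def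
proof (rule nn_integral_mono_off_superlevel_set[OF zero_risk[unfolded expected_loss_def]])
  show "0 < ennreal c"
    using c by simp
  show "(\<lambda>z. ennreal (if 0 < abstention_margin n hY hn (fst z)
                 then c * \<Phi> (a * abstention_margin n hY hn (fst z)) else 0)) \<in> borel_measurable D"
    using measurable_compose[OF _ \<Phi>_measurable] margin_measurable by measurable
  fix z
  assume "ennreal (abs_loss n c hY hn (fst z) (snd z)) < ennreal c"
  then have "abs_loss n c hY hn (fst z) (snd z) < c"
    by (metis ennreal_leI not_le)
  then have "0 < abstention_margin n hY hn (fst z)" "argmax_label n hY (fst z) = snd z"
    by (rule abs_loss_less_cost_imp_correct[OF c(2)])+
  then show "ennreal (second_stage_loss n c \<Phi> (\<lambda>x y. a * hY x y) (\<lambda>x. a * hn x) (fst z) (snd z))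
    \<le> ennreal (if 0 < abstention_margin n hY hn (fst z)
                then c * \<Phi> (a * abstention_margin n hY hn (fst z)) else 0)"
    using second_stage_loss_scale_if_correct[OF n a, of hY "fst z" "snd z"] by simp
qed

theorem theorem5:
  fixes n :: nat and c :: real and \<Phi> :: "real \<Rightarrow> real"
    and HY :: "('x \<Rightarrow> nat \<Rightarrow> real) set" and Hn :: "('x \<Rightarrow> real) set"
    and loss :: "('x \<Rightarrow> nat \<Rightarrow> real) \<Rightarrow> 'x \<Rightarrow> nat \<Rightarrow> real"
    and D :: "('x \<times> nat) measure"
    and hY_hat :: "'x \<Rightarrow> nat \<Rightarrow> real" and hn_hat :: "'x \<Rightarrow> real"
    and hY_star :: "'x \<Rightarrow> nat \<Rightarrow> real" and hn_star :: "'x \<Rightarrow> real"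
  assumes n2: "n \<ge> 2"
    and c_pos: "0 < c" and c_lt1: "c < 1"
    and scale_Y: "\<And>hY \<alpha>. hY \<in> HY \<Longrightarrow> (\<lambda>x y. \<alpha> * hY x y) \<in> HY"
    and scale_n: "\<And>hn \<alpha>. hn \<in> Hn \<Longrightarrow> (\<lambda>x. \<alpha> * hn x) \<in> Hn"
    and loss_nonneg: "\<And>h x y. loss h x y \<ge> 0"
    and Phi_decr: "antimono \<Phi>"
    and Phi_lim: "(\<Phi> \<longlongrightarrow> 0) at_top"
    and Phi_ge: "\<And>t. \<Phi> t \<ge> (if t \<le> 0 then 1 else 0)"
    and D_prob: "prob_space D"
    and D_labels: "AE z in D. snd z \<in> {1..n}"
    and meas_Y: "\<And>hY k. hY \<in> HY \<Longrightarrow> (\<lambda>z. hY (fst z) k) \<in> borel_measurable D"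
    and meas_n: "\<And>hn. hn \<in> Hn \<Longrightarrow> (\<lambda>z. hn (fst z)) \<in> borel_measurable D"
    and hat_in: "hY_hat \<in> HY" "hn_hat \<in> Hn"
    and hat_first: "expected_loss D (loss hY_hat) = (INF hY\<in>HY. expected_loss D (loss hY))"
    and hat_second: "expected_loss D (second_stage_loss n c \<Phi> hY_hat hn_hat)
          = (INF h\<in>HY \<times> Hn. expected_loss D (second_stage_loss n c \<Phi> (fst h) (snd h)))"
    and star_in: "hY_star \<in> HY" "hn_star \<in> Hn"
    and star_zero: "expected_loss D (abs_loss n c hY_star hn_star) = 0"
  shows "expected_loss D (abs_loss n c hY_hat hn_hat) = 0"
proof -
  let ?m = "\<lambda>z. abstention_margin n hY_star hn_star (fst z)"
  have n: "n \<ge> 1"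
    using n2 by simp
  have m_measurable: "?m \<in> borel_measurable D"
    unfolding abstention_margin_def maxscore_def using meas_Y[OF star_in(1)] meas_n[OF star_in(2)]
    by (intro borel_measurable_diff borel_measurable_Max) auto
  have \<Phi>_measurable: "\<Phi> \<in> borel_measurable borel"
    using Phi_decr by (rule borel_measurable_antimono)
  have scaled_star_in: "(\<lambda>x y. real (Suc i) * hY_star x y, \<lambda>x. real (Suc i) * hn_star x) \<in> HY \<times> Hn" for i
    using scale_Y scale_n star_in by auto
  define bound where "bound i =
    (\<integral>\<^sup>+ z. ennreal (if 0 < ?m z then c * \<Phi> (real (Suc i) * ?m z) else 0) \<partial>D)" for i
  have "expected_loss D (abs_loss n c hY_hat hn_hat)
      \<le> expected_loss D (second_stage_loss n c \<Phi> hY_hat hn_hat)"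
    unfolding expected_loss_def using c_pos
    by (intro nn_integral_mono ennreal_leI abs_loss_le_second_stage_loss[OF n _ Phi_ge]) simp
  also have "\<dots> \<le> (INF i. bound i)"
    unfolding hat_second
  proof (rule INF_greatest)
    fix i
    show "(INF h\<in>HY \<times> Hn. expected_loss D (second_stage_loss n c \<Phi> (fst h) (snd h))) \<le> bound i"
      using expected_second_stage_loss_scale_le[OF n c_pos less_imp_le[OF c_lt1] _ star_zero
          m_measurable \<Phi>_measurable, where a = "real (Suc i)"]
      by (intro INF_lower2[OF scaled_star_in[of i]]) (simp add: bound_def)
  qed
  also have "\<dots> = 0"
    unfolding bound_def using Phi_decr c_pos
    by (intro INF_nn_integral_antimono_scaled_eq_0 prob_space.finite_measure D_prob m_measurable
        tendsto_mult_right_zero Phi_lim) (auto simp: antimono_def)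
  finally show ?thesis
    by simp
qed

end
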